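(* Let $Q$ be a Foulis quantale, and for $t\in Q$ put $t^\perp=[t^*]$. On $Q$ define the relation $s\le t$ iff $s=t\cdot s$. Then for all $t,r\in Q$ and all $k\in[Q]=\{[t]\mid t\in Q\}$: ( * ) $r^*\cdot t=0 \iff t=[r^*]\cdot t$; ( ** ) $t\le r$ implies $r^\perp\le t^\perp$, and $k^{\perp\perp}=k$; ( *** ) $t\le r^\perp \iff r\le t^\perp$. Moreover, $[Q]$ is a complete orthomodular lattice with the following structure: order $k_1\le k_2$ iff $k_1=k_2\cdot k_1$; top element $1=[0]$; orthocomplement $k^\perp=[k]$; meet $k_1\wedge k_2=\big(k_1\cdot[[k_2]\cdot k_1]\big)^{\perp\perp}$; and for any $S\subseteq[Q]$, join $\bigvee S=[[\bigsqcup S]]$, where $\bigsqcup$ denotes the join in the complete lattice $Q$.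
   Context: A quantale is a complete lattice $Q$ (join $\bigsqcup$, order $\sqsubseteq$) with an associative multiplication distributing over arbitrary joins on both sides; unital if it has a two-sided unit $e$; involutive if equipped with a join-preserving semigroup involution $*$ (so $a^{**}=a$, $(ab)^*=b^*a^*$). A Foulis quantale is a unital involutive quantale $Q$ with an endomap $[-]\colon Q\to Q$ such that: (a) $[s]\cdot[s]=[s]=[s]^*$ for all $s$; (b) $[e]=0$, where $0$ is the least element of $Q$; (c) for all $s,x\in Q$: $s\cdot x=0$ iff there exists $y\in Q$ with $x=[s]\cdot y$. An orthomodular lattice is a bounded lattice with an involutive order-reversing map $x\mapsto x^\perp$ with $x\wedge x^\perp=0$ such that $x\le y$ implies $y=x\vee(x^\perp\wedge y)$. *)

theory Defs
  imports Main
begin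

text \<open>Quantales are modelled on a type of class complete_lattice (join = Sup, order = less_eq,
least element = bot), with the multiplication, unit, involution and the Foulis map
given as explicit parameters.\<close>

definition quantale :: "('a::complete_lattice \<Rightarrow> 'a \<Rightarrow> 'a) \<Rightarrow> bool" where
  "quantale m \<longleftrightarrow>
     (\<forall>a b c. m (m a b) c = m a (m b c)) \<and>
     (\<forall>a A. m a (Sup A) = Sup (m a ` A)) \<and>
     (\<forall>a A. m (Sup A) a = Sup ((\<lambda>b. m b a) ` A))"

definition unital_involutive_quantale ::
  "('a::complete_lattice \<Rightarrow> 'a \<Rightarrow> 'a) \<Rightarrow> 'a \<Rightarrow> ('a \<Rightarrow> 'a) \<Rightarrow> bool" where
  "unital_involutive_quantale m e st \<longleftrightarrow>
     quantale m \<and>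
     (\<forall>a. m e a = a \<and> m a e = a) \<and>
     (\<forall>a. st (st a) = a) \<and>
     (\<forall>a b. st (m a b) = m (st b) (st a)) \<and>
     (\<forall>A. st (Sup A) = Sup (st ` A))"

definition foulis_quantale ::
  "('a::complete_lattice \<Rightarrow> 'a \<Rightarrow> 'a) \<Rightarrow> 'a \<Rightarrow> ('a \<Rightarrow> 'a) \<Rightarrow> ('a \<Rightarrow> 'a) \<Rightarrow> bool" where
  "foulis_quantale m e st br \<longleftrightarrow>
     unital_involutive_quantale m e st \<and>
     (\<forall>s. m (br s) (br s) = br s \<and> br s = st (br s)) \<and>
     br e = bot \<and>
     (\<forall>s x. m s x = bot \<longleftrightarrow> (\<exists>y. x = m (br s) y))"

definition fq_perp :: "('a \<Rightarrow> 'a) \<Rightarrow> ('a \<Rightarrow> 'a) \<Rightarrow> 'a \<Rightarrow> 'a" where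
  "fq_perp st br t = br (st t)"

definition fq_le :: "('a \<Rightarrow> 'a \<Rightarrow> 'a) \<Rightarrow> 'a \<Rightarrow> 'a \<Rightarrow> bool" where
  "fq_le m s t \<longleftrightarrow> s = m t s"

definition complete_orthomodular_lattice ::
  "'a set \<Rightarrow> ('a \<Rightarrow> 'a \<Rightarrow> bool) \<Rightarrow> 'a \<Rightarrow> ('a \<Rightarrow> 'a) \<Rightarrow> ('a \<Rightarrow> 'a \<Rightarrow> 'a) \<Rightarrow> ('a set \<Rightarrow> 'a) \<Rightarrow> bool" where
  "complete_orthomodular_lattice K le tp cpl meet Join \<longleftrightarrow>
     (\<forall>x\<in>K. le x x) \<and>
     (\<forall>x\<in>K. \<forall>y\<in>K. le x y \<and> le y x \<longrightarrow> x = y) \<and>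
     (\<forall>x\<in>K. \<forall>y\<in>K. \<forall>z\<in>K. le x y \<and> le y z \<longrightarrow> le x z) \<and>
     tp \<in> K \<and> (\<forall>x\<in>K. le x tp) \<and>
     (\<forall>S. S \<subseteq> K \<longrightarrow> Join S \<in> K \<and> (\<forall>x\<in>S. le x (Join S)) \<and>
          (\<forall>u\<in>K. (\<forall>x\<in>S. le x u) \<longrightarrow> le (Join S) u)) \<and>
     (\<forall>x\<in>K. \<forall>y\<in>K. meet x y \<in> K \<and> le (meet x y) x \<and> le (meet x y) y \<and>
          (\<forall>u\<in>K. le u x \<and> le u y \<longrightarrow> le u (meet x y))) \<and>
     (\<forall>x\<in>K. cpl x \<in> K \<and> cpl (cpl x) = x) \<and>
     (\<forall>x\<in>K. \<forall>y\<in>K. le x y \<longrightarrow> le (cpl y) (cpl x)) \<and>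
     (\<forall>x\<in>K. meet x (cpl x) = Join {}) \<and>
     (\<forall>x\<in>K. \<forall>y\<in>K. le x y \<longrightarrow> y = Join {x, meet (cpl x) y})"

end

theory Submission
  imports Defs
begin

text \<open>The Foulis map makes the right annihilator of \<open>s\<close> the principal right ideal of the
projection \<open>[s]\<close>. From this, \<open>[[[u]]] = [u]\<close>, so \<open>\<perp>\<close> is an involution on projections, and
\<open>t\<^sup>\<perp>\<^sup>\<perp> = [[t\<^sup>*]]\<close> is the least projection \<open>p\<close> with \<open>t = p t\<close>. Joins and meets of projections
are such closures: \<open>\<Squnion>S\<close> is self-adjoint and fixed by every projection above \<open>S\<close>, and
\<open>k\<^sub>1 [[k\<^sub>2] k\<^sub>1]\<close> lies below \<open>k\<^sub>1\<close> and \<open>k\<^sub>2\<close> and is fixed by every common lower bound.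
For orthomodularity, let \<open>x \<le> y\<close> and \<open>j = x \<or> (x\<^sup>\<perp> \<and> y) \<le> y\<close>; then \<open>y \<and> j\<^sup>\<perp>\<close> lies below both
\<open>x\<^sup>\<perp> \<and> y \<le> j\<close> and \<open>j\<^sup>\<perp>\<close>, so it vanishes, and together with \<open>j \<le> y\<close> this forces \<open>y = j\<close>.\<close>

locale foulis =
  fixes m :: "'a::complete_lattice \<Rightarrow> 'a \<Rightarrow> 'a"
    and e :: 'a and st :: "'a \<Rightarrow> 'a" and br :: "'a \<Rightarrow> 'a"
  assumes foulis_quantale: "foulis_quantale m e st br"
begin

lemma mult_assoc: "m (m a b) c = m a (m b c)"
  using foulis_quantale
  unfolding foulis_quantale_def unital_involutive_quantale_def quantale_def by blast

lemma mult_Sup_right: "m a (Sup A) = Sup (m a ` A)"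
  using foulis_quantale
  unfolding foulis_quantale_def unital_involutive_quantale_def quantale_def by blast

lemma mult_Sup_left: "m (Sup A) a = Sup ((\<lambda>b. m b a) ` A)"
  using foulis_quantale
  unfolding foulis_quantale_def unital_involutive_quantale_def quantale_def by blast

lemma unit_left: "m e a = a"
  using foulis_quantale unfolding foulis_quantale_def unital_involutive_quantale_def by blast

lemma star_star: "st (st a) = a"
  using foulis_quantale unfolding foulis_quantale_def unital_involutive_quantale_def by blast

lemma star_mult: "st (m a b) = m (st b) (st a)"
  using foulis_quantale unfolding foulis_quantale_def unital_involutive_quantale_def by blast

lemma star_Sup: "st (Sup A) = Sup (st ` A)"
  using foulis_quantale unfolding foulis_quantale_def unital_involutive_quantale_def by blast

lemma br_idem: "m (br s) (br s) = br s"
  using foulis_quantale unfolding foulis_quantale_def by blast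

lemma star_br: "st (br s) = br s"
  using foulis_quantale unfolding foulis_quantale_def by metis

lemma br_unit: "br e = bot"
  using foulis_quantale unfolding foulis_quantale_def by blast

lemma mult_eq_bot_iff_ex: "m s x = bot \<longleftrightarrow> (\<exists>y. x = m (br s) y)"
  using foulis_quantale unfolding foulis_quantale_def by blast

lemma mult_bot_right: "m a bot = bot"
  by (metis Sup_empty image_empty mult_Sup_right)

lemma star_bot: "st bot = bot"
  by (metis Sup_empty image_empty star_Sup)

lemma star_eq_bot_iff: "st a = bot \<longleftrightarrow> a = bot"
  by (metis star_bot star_star)

lemma mult_bot_left: "m bot a = bot"
  by (metis star_eq_bot_iff star_mult mult_bot_right)

lemma mult_eq_bot_iff: "m s x = bot \<longleftrightarrow> x = m (br s) x"
proof
  assume "m s x = bot"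
  then obtain y where y: "x = m (br s) y"
    using mult_eq_bot_iff_ex by blast
  then have "m (br s) x = m (m (br s) (br s)) y"
    by (simp add: mult_assoc)
  then show "x = m (br s) x"
    using y br_idem by simp
next
  assume "x = m (br s) x"
  then show "m s x = bot"
    using mult_eq_bot_iff_ex by blast
qed

lemma mult_br_self: "m s (br s) = bot"
  using mult_eq_bot_iff br_idem by metis

lemma br_mult_self: "m (br s) (st s) = bot"
  by (metis mult_br_self star_br star_eq_bot_iff star_mult)

lemma mult_eq_bot_iff_left: "m y s = bot \<longleftrightarrow> y = m y (br (st s))"
proof -
  have "m y s = bot \<longleftrightarrow> m (st s) (st y) = bot"
    by (metis star_eq_bot_iff star_mult)
  also have "\<dots> \<longleftrightarrow> st y = m (br (st s)) (st y)"
    by (rule mult_eq_bot_iff)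
  also have "\<dots> \<longleftrightarrow> y = m y (br (st s))"
    by (metis star_br star_mult star_star)
  finally show ?thesis .
qed

lemma mult_eq_bot_commute_star: "m (st r) t = bot \<longleftrightarrow> m (st t) r = bot"
  by (metis star_mult star_star star_eq_bot_iff)

lemma br_bot: "br bot = e"
  by (metis mult_eq_bot_iff unit_left star_bot mult_bot_right star_star star_mult)

lemma br_br_br: "br (br (br u)) = br u"
proof -
  define p where "p = br u"
  have u: "u = m u (br p)"
    using mult_br_self mult_eq_bot_iff_left p_def star_br by metis
  have "m u (br (br p)) = m u (m (br p) (br (br p)))"
    using u by (metis mult_assoc)
  then have "m u (br (br p)) = bot"
    using mult_br_self mult_bot_right by metis
  then have p_right: "br (br p) = m p (br (br p))"
    using mult_eq_bot_iff p_def by metis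
  have "p = m (br (br p)) p"
    using br_mult_self[of p] mult_eq_bot_iff star_br p_def by metis
  then have "p = m p (br (br p))"
    by (metis star_mult star_br p_def)
  then show ?thesis
    using p_right p_def by metis
qed

lemma br_br_projection: "k \<in> range br \<Longrightarrow> br (br k) = k"
  using br_br_br by auto

lemma star_projection: "k \<in> range br \<Longrightarrow> st k = k"
  using star_br by auto

lemma projection_idem: "k \<in> range br \<Longrightarrow> m k k = k"
  using br_idem by auto

lemma perp_antitone: "t = m r t \<Longrightarrow> br (st r) = m (br (st t)) (br (st r))"
proof -
  assume "t = m r t"
  then have "st t = m (st t) (st r)"
    using star_mult by metis
  then have "m (st t) (br (st r)) = m (st t) (m (st r) (br (st r)))"
    by (metis mult_assoc)
  then have "m (st t) (br (st r)) = bot"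
    using mult_br_self mult_bot_right by metis
  then show ?thesis
    using mult_eq_bot_iff by metis
qed

lemma closure_fixes: "t = m (br (br (st t))) t"
proof -
  have "st t = m (st t) (br (br (st t)))"
    using mult_br_self mult_eq_bot_iff_left star_br by metis
  then show ?thesis
    by (metis star_mult star_star star_br)
qed

lemma closure_least:
  assumes p: "p \<in> range br" and t: "t = m p t"
  shows "br (br (st t)) = m p (br (br (st t)))"
proof -
  have "br p = m (br (st t)) (br p)"
    using perp_antitone[OF t] star_projection[OF p] by simp
  then have "br (st (br (st t))) = m (br (st (br p))) (br (st (br (st t))))"
    using perp_antitone by blast
  then show ?thesis
    using star_br br_br_projection[OF p] by simp
qed

lemma closure_eq_bot_iff: "br (br (st t)) = bot \<longleftrightarrow> t = bot"
  by (metis closure_fixes mult_bot_left mult_bot_right star_bot br_bot br_unit)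

definition proj_join :: "'a set \<Rightarrow> 'a" where
  "proj_join S = br (br (Sup S))"

definition proj_meet :: "'a \<Rightarrow> 'a \<Rightarrow> 'a" where
  "proj_meet x y = br (br (st (m x (br (m (br y) x)))))"

lemma proj_join_in_range: "proj_join S \<in> range br"
  unfolding proj_join_def by simp

lemma proj_meet_in_range: "proj_meet x y \<in> range br"
  unfolding proj_meet_def by simp

lemma proj_join_upper:
  assumes S: "S \<subseteq> range br" and x: "x \<in> S"
  shows "x = m (proj_join S) x"
proof -
  have "Sup ((\<lambda>b. m b (br (Sup S))) ` S) = bot"
    using mult_br_self mult_Sup_left by metis
  then have "m x (br (Sup S)) = bot"
    using x by (metis (no_types, lifting) SUP_upper bot_unique)
  then have "m (br (Sup S)) x = bot"
    using star_mult star_br star_projection x S star_bot by (metis subsetD)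
  then show ?thesis
    unfolding proj_join_def using mult_eq_bot_iff by metis
qed

lemma proj_join_least:
  assumes S: "S \<subseteq> range br" and u: "u \<in> range br" and upper: "\<forall>x\<in>S. x = m u x"
  shows "proj_join S = m u (proj_join S)"
proof -
  have "st ` S = S"
    using S star_projection by force
  then have star_Sup_S: "st (Sup S) = Sup S"
    using star_Sup by simp
  have "m u ` S = S"
    using upper by force
  then have "Sup S = m u (Sup S)"
    using mult_Sup_right by simp
  from closure_least[OF u this] show ?thesis
    unfolding proj_join_def star_Sup_S .
qed

lemma proj_meet_below_left:
  assumes x: "x \<in> range br"
  shows "proj_meet x y = m x (proj_meet x y)"
  unfolding proj_meet_def using closure_least[OF x] mult_assoc projection_idem[OF x] by metis

lemma proj_meet_below_right:
  assumes y: "y \<in> range br"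
  shows "proj_meet x y = m y (proj_meet x y)"
proof -
  have "m (br y) (m x (br (m (br y) x))) = bot"
    using mult_br_self mult_assoc by metis
  then have "m x (br (m (br y) x)) = m y (m x (br (m (br y) x)))"
    using mult_eq_bot_iff br_br_projection[OF y] by metis
  then show ?thesis
    unfolding proj_meet_def using closure_least[OF y] by metis
qed

lemma proj_meet_greatest:
  assumes y: "y \<in> range br" and ux: "u = m x u" and uy: "u = m y u"
  shows "u = m (proj_meet x y) u"
proof -
  define w where "w = m x (br (m (br y) x))"
  have "m (br y) y = bot"
    using br_mult_self[of y] star_projection[OF y] by simp
  then have "m (m (br y) x) u = bot"
    using ux uy mult_assoc mult_bot_left by metis
  then have "u = m (br (m (br y) x)) u"
    using mult_eq_bot_iff by metis
  then have "m w u = u"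
    unfolding w_def using ux mult_assoc by metis
  then have "m (br (br (st w))) u = u"
    using closure_fixes[of w] mult_assoc by metis
  then show ?thesis
    unfolding w_def proj_meet_def by simp
qed

lemma proj_meet_perp_self:
  assumes x: "x \<in> range br"
  shows "proj_meet x (br x) = bot"
  unfolding proj_meet_def
  using br_br_projection[OF x] projection_idem[OF x] mult_br_self star_bot br_bot br_unit by simp

lemma eq_if_below_and_meet_perp_bot:
  assumes y: "y \<in> range br" and j: "j \<in> range br"
    and jy: "j = m y j" and meet: "proj_meet y (br j) = bot"
  shows "y = j"
proof -
  have jy': "m j y = j"
    using jy star_projection[OF j] star_projection[OF y] star_mult by metis
  then have "proj_meet y (br j) = br (br (st (m y (br j))))"
    unfolding proj_meet_def using br_br_projection[OF j] by simp
  then have "br (br (st (m y (br j)))) = bot"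
    using meet by simp
  then have "m y (br j) = bot"
    using closure_eq_bot_iff by blast
  then have "m (br j) y = bot"
    using star_mult star_br star_projection[OF y] star_bot by metis
  then show ?thesis
    using mult_eq_bot_iff br_br_projection[OF j] jy' by metis
qed

lemma orthomodular_law:
  assumes x: "x \<in> range br" and y: "y \<in> range br" and xy: "x = m y x"
  shows "y = proj_join {x, proj_meet (br x) y}"
proof -
  define M where "M = proj_meet (br x) y"
  define j where "j = proj_join {x, M}"
  have S: "{x, M} \<subseteq> range br"
    using x proj_meet_in_range M_def by auto
  have j_range: "j \<in> range br"
    unfolding j_def by (rule proj_join_in_range)
  have My: "M = m y M"
    unfolding M_def by (rule proj_meet_below_right[OF y])
  have jy: "j = m y j"
    unfolding j_def using proj_join_least[OF S y] xy My by simp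
  define z where "z = proj_meet y (br j)"
  have zy: "z = m y z"
    unfolding z_def by (rule proj_meet_below_left[OF y])
  have zj: "z = m (br j) z"
    unfolding z_def by (rule proj_meet_below_right) simp
  have "br j = m (br x) (br j)"
    using perp_antitone[OF proj_join_upper[OF S, of x, folded j_def]]
      star_projection[OF x] star_projection[OF j_range] by simp
  then have "z = m (br x) z"
    using zj mult_assoc by metis
  then have "z = m M z"
    unfolding M_def using proj_meet_greatest[OF y] zy by blast
  then have "z = m j z"
    using proj_join_upper[OF S, of M, folded j_def] mult_assoc by (metis insertCI)
  then have "z = m (proj_meet j (br j)) z"
    using proj_meet_greatest zj by simp
  then have "proj_meet y (br j) = bot"
    unfolding z_def using proj_meet_perp_self[OF j_range] mult_bot_left by simp
  then have "y = j"
    using eq_if_below_and_meet_perp_bot[OF y j_range jy] by blast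
  then show ?thesis
    unfolding j_def M_def .
qed

lemma fq_le_perp_antitone: "fq_le m t r \<Longrightarrow> fq_le m (fq_perp st br r) (fq_perp st br t)"
  unfolding fq_le_def fq_perp_def by (rule perp_antitone)

lemma fq_perp_perp_projection: "k \<in> range br \<Longrightarrow> fq_perp st br (fq_perp st br k) = k"
  unfolding fq_perp_def using br_br_projection star_br by auto

lemma fq_le_perp_iff: "fq_le m t (fq_perp st br r) \<longleftrightarrow> fq_le m r (fq_perp st br t)"
proof -
  have "fq_le m t (fq_perp st br r) \<longleftrightarrow> m (st r) t = bot"
    unfolding fq_le_def fq_perp_def by (rule mult_eq_bot_iff[symmetric])
  also have "\<dots> \<longleftrightarrow> m (st t) r = bot"
    by (rule mult_eq_bot_commute_star)
  also have "\<dots> \<longleftrightarrow> fq_le m r (fq_perp st br t)"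
    unfolding fq_le_def fq_perp_def by (rule mult_eq_bot_iff)
  finally show ?thesis .
qed

lemma projections_complete_orthomodular_lattice:
  "complete_orthomodular_lattice (range br) (fq_le m) (br bot) br proj_meet proj_join"
  unfolding complete_orthomodular_lattice_def fq_le_def
proof (intro conjI ballI allI impI)
  show "x = m x x" if "x \<in> range br" for x
    using projection_idem that by simp
  show "x = y" if "x \<in> range br" "y \<in> range br" "x = m y x \<and> y = m x y" for x y
    using that star_projection star_mult by metis
  show "x = m z x" if "x = m y x \<and> y = m z y" for x y z
    using that mult_assoc by metis
  show "x = m (br bot) x" for x
    using br_bot unit_left by simp
  show "proj_join S = m u (proj_join S)"
    if "S \<subseteq> range br" "u \<in> range br" "\<forall>x\<in>S. x = m u x" for S u
    using proj_join_least that by blast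
  show "u = m (proj_meet x y) u" if "y \<in> range br" "u = m x u \<and> u = m y u" for x y u
    using proj_meet_greatest that by blast
  show "br y = m (br x) (br y)" if "x \<in> range br" "y \<in> range br" "x = m y x" for x y
    using perp_antitone that star_projection by metis
  show "proj_meet x (br x) = proj_join {}" if "x \<in> range br" for x
    using proj_meet_perp_self[OF that] br_unit br_bot by (simp add: proj_join_def)
  show "x = m (proj_join S) x" if "S \<subseteq> range br" "x \<in> S" for S x
    using proj_join_upper that by blast
  show "proj_meet x y = m x (proj_meet x y)" if "x \<in> range br" for x y
    using proj_meet_below_left that by blast
  show "proj_meet x y = m y (proj_meet x y)" if "y \<in> range br" for x y
    using proj_meet_below_right that by blast
  show "br (br x) = x" if "x \<in> range br" for x
    using br_br_projection that by blast
  show "y = proj_join {x, proj_meet (br x) y}"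
    if "x \<in> range br" "y \<in> range br" "x = m y x" for x y
    using orthomodular_law that by blast
qed (simp_all add: proj_join_in_range proj_meet_in_range)

lemma proj_meet_eq_perp_perp:
  "proj_meet k1 k2 = fq_perp st br (fq_perp st br (m k1 (br (m (br k2) k1))))"
  unfolding proj_meet_def fq_perp_def by (simp add: star_br)

end

theorem mainTheorem5:
  fixes m :: "'a::complete_lattice \<Rightarrow> 'a \<Rightarrow> 'a"
    and e :: 'a and st :: "'a \<Rightarrow> 'a" and br :: "'a \<Rightarrow> 'a"
  assumes "foulis_quantale m e st br"
  shows "(\<forall>t r. m (st r) t = bot \<longleftrightarrow> t = m (br (st r)) t)
    \<and> (\<forall>t r. fq_le m t r \<longrightarrow> fq_le m (fq_perp st br r) (fq_perp st br t))
    \<and> (\<forall>k\<in>range br. fq_perp st br (fq_perp st br k) = k)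
    \<and> (\<forall>t r. fq_le m t (fq_perp st br r) \<longleftrightarrow> fq_le m r (fq_perp st br t))
    \<and> complete_orthomodular_lattice (range br) (fq_le m) (br bot) br
        (\<lambda>k1 k2. fq_perp st br (fq_perp st br (m k1 (br (m (br k2) k1)))))
        (\<lambda>S. br (br (Sup S)))"
proof -
  interpret foulis m e st br
    by (rule foulis.intro[OF assms])
  have meet: "(\<lambda>k1 k2. fq_perp st br (fq_perp st br (m k1 (br (m (br k2) k1))))) = proj_meet"
    by (intro ext) (simp add: proj_meet_eq_perp_perp)
  have join: "(\<lambda>S. br (br (Sup S))) = proj_join"
    by (intro ext) (simp add: proj_join_def)
  show ?thesis
    unfolding meet join
    using mult_eq_bot_iff fq_le_perp_antitone fq_perp_perp_projection fq_le_perp_iff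
      projections_complete_orthomodular_lattice by blast
qed

end
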